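(* Let $\rho>0$, $n\in\mathbb{Z}_+$, $t\ge 0$ and $p\in[0,1]$. For the ancestral chain started at $(a(0),b(0),c(0))=(n,0,1)$ with $s(0)=0$, $\mathbb{E}_{n,0,1,0}[p^{a(t)}\mid s(t)=0]=\tilde\nu_{n,0,1}(t)$, where $\tilde\nu_{n,0,1}(t)$ is $\nu_{n,0,1}(t)$ with $q=g=1$ and $\rho=0$ substituted.
   Context: The ancestral chain $(a(t),b(t),c(t))$ with parameter $\rho$ is the continuous-time Markov chain on $\mathbb{Z}_+^3\setminus\{\mathbf 0\}$ which from $(a,b,c)$ jumps to $(a+1,b+1,c-1)$ at rate $c\rho/2$ (a recombination event), to $(a-1,b-1,c+1)$ at rate $ab$, to $(a-1,b,c)$ at rate $ac+a(a-1)/2$, to $(a,b-1,c)$ at rate $bc+b(b-1)/2$, and to $(a,b,c-1)$ at rate $c(c-1)/2$; $s(t)$ counts recombination jumps in $(0,t)$. $\nu_{l,m,n}(t)=\mathbb{E}_{l,m,n}[p^{a(t)}q^{b(t)}g^{c(t)}]$ (equivalently, by moment duality, $\mathbb{E}_{p,q,g}[x(t)^ly(t)^mx_1(t)^n]$ for the two-locus two-allele Wright–Fisher diffusion with recombination parameter $\rho$ and initial allele frequencies $p,q$ and initial $A_1B_1$ gamete frequency $g$); it is a polynomial in $(p,q,g)$ whose coefficients depend on $\rho$ and $t$, and $\tilde\nu_{n,0,1}(t)$ is this polynomial evaluated at $q=g=1$, $\rho=0$. *)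

theory Defs
  imports Complex_Main
begin

text \<open>States of the augmented ancestral chain: (a, b, c, f) where f = min(s, 1)
  records whether at least one recombination event has occurred. The pair
  (ancestral chain, f) is itself a continuous-time Markov chain (a function of
  the Markov chain (a,b,c,s) that is again Markov), and {s(t)=0} = {f(t)=0}.\<close>

type_synonym state = "nat \<times> nat \<times> nat \<times> nat"

definition jumps :: "real \<Rightarrow> state \<Rightarrow> (state \<times> real) list" where
  "jumps rho x = (case x of (a, b, c, f) \<Rightarrow>
     [((a + 1, b + 1, c - 1, 1), real c * rho / 2),
      ((a - 1, b - 1, c + 1, f), real a * real b),
      ((a - 1, b, c, f), real a * real c + real a * (real a - 1) / 2),
      ((a, b - 1, c, f), real b * real c + real b * (real b - 1) / 2),
      ((a, b, c - 1, f), real c * (real c - 1) / 2)])"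

definition gen :: "real \<Rightarrow> state \<Rightarrow> state \<Rightarrow> real" where
  "gen rho x y = sum_list [r. (z, r) \<leftarrow> jumps rho x, z = y]
      - (if x = y then sum_list (map snd (jumps rho x)) else 0)"

text \<open>Finite state space reachable from states with a + b + 2c \<le> N
  (a + b + 2c never increases along the chain).\<close>
definition states :: "nat \<Rightarrow> state set" where
  "states N = {(a, b, c, f). a \<le> N \<and> b \<le> N \<and> c \<le> N \<and> f \<le> 1 \<and> a + b + 2 * c \<le> N}"

fun genpow :: "real \<Rightarrow> nat \<Rightarrow> nat \<Rightarrow> state \<Rightarrow> state \<Rightarrow> real" where
  "genpow rho N 0 x y = (if x = y then 1 else 0)"
| "genpow rho N (Suc k) x y = (\<Sum>z\<in>states N. gen rho x z * genpow rho N k z y)"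

definition trans :: "real \<Rightarrow> nat \<Rightarrow> real \<Rightarrow> state \<Rightarrow> state \<Rightarrow> real" where
  "trans rho N t x y = (\<Sum>k. t ^ k / fact k * genpow rho N k x y)"

definition nu :: "real \<Rightarrow> nat \<Rightarrow> nat \<Rightarrow> nat \<Rightarrow> real \<Rightarrow> real \<Rightarrow> real \<Rightarrow> real \<Rightarrow> real" where
  "nu rho l m n t p q g =
     (\<Sum>y\<in>states (l + m + 2 * n).
        trans rho (l + m + 2 * n) t (l, m, n, 0) y *
        (case y of (a, b, c, f) \<Rightarrow> p ^ a * q ^ b * g ^ c))"

definition cond_exp_norec :: "real \<Rightarrow> nat \<Rightarrow> real \<Rightarrow> real \<Rightarrow> real" where
  "cond_exp_norec rho n t p =
     (\<Sum>y\<in>{y \<in> states (n + 2). snd (snd (snd y)) = 0}.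
        trans rho (n + 2) t (n, 0, 1, 0) y * p ^ fst y)
     / (\<Sum>y\<in>{y \<in> states (n + 2). snd (snd (snd y)) = 0}.
        trans rho (n + 2) t (n, 0, 1, 0) y)"

end

theory Submission
  imports Defs
begin

text \<open>Started at (n,0,1), the chain stays in the states (a,0,1) until the first recombination,
  and from there the only jumps are coalescences a to a-1 (rate a + a(a-1)/2) and the
  recombination (rate rho/2). On targets without recombination the generator therefore acts as
  Q0 - rho/2, where Q0 is the generator for rho = 0; since the scalar commutes with Q0, the
  transition probabilities factor as exp(-rho t/2) times those of the rho = 0 chain. The factor
  cancels in the conditional expectation, and the rho = 0 chain never recombines, so what remains
  is nu at rho = 0 with q = g = 1.\<close>

abbreviation recombined :: "state \<Rightarrow> bool" where
  "recombined x \<equiv> snd (snd (snd x)) \<noteq> 0"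

definition coalescence_rate :: "nat \<Rightarrow> real" where
  "coalescence_rate a = real a * (real a + 1) / 2"

lemma coalescence_rate_nonneg: "coalescence_rate a \<ge> 0"
  by (simp add: coalescence_rate_def)

lemma coalescence_rate_mono: "a \<le> b \<Longrightarrow> coalescence_rate a \<le> coalescence_rate b"
  unfolding coalescence_rate_def by (intro divide_right_mono mult_mono) auto

lemma finite_states: "finite (states N)"
proof (rule finite_subset)
  show "states N \<subseteq> {..N} \<times> {..N} \<times> {..N} \<times> {..1}" by (auto simp: states_def)
qed auto

lemma gen_prerecombination:
  "gen rho (a, 0, 1, 0) z =
     (if z = (a - 1, 0, 1, 0) then coalescence_rate a else 0)
   - (if z = (a, 0, 1, 0) then coalescence_rate a + rho / 2 else 0)
   + (if z = (a + 1, 1, 0, 1) then rho / 2 else 0)"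
  by (cases a) (auto simp: gen_def jumps_def coalescence_rate_def algebra_simps)

lemma gen_recombined_not_recombined:
  "recombined x \<Longrightarrow> \<not> recombined y \<Longrightarrow> gen rho x y = 0"
  by (cases x; cases y) (auto simp: gen_def jumps_def)

lemma genpow_recombined_not_recombined:
  "recombined x \<Longrightarrow> \<not> recombined y \<Longrightarrow> genpow rho N k x y = 0"
proof (induction k arbitrary: x)
  case (Suc k)
  have "gen rho x z * genpow rho N k z y = 0" for z
    using Suc gen_recombined_not_recombined[of x z rho] by (cases "recombined z") auto
  then show ?case by (simp only: genpow.simps) (rule sum.neutral, auto)
qed auto

lemma genpow_Suc_prerecombination:
  assumes "a \<le> n" and "rho = 0 \<or> \<not> recombined y"
  shows "genpow rho (n + 2) (Suc k) (a, 0, 1, 0) y =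
           coalescence_rate a * genpow rho (n + 2) k (a - 1, 0, 1, 0) y
         - (coalescence_rate a + rho / 2) * genpow rho (n + 2) k (a, 0, 1, 0) y"
proof -
  let ?P = "\<lambda>x. genpow rho (n + 2) k x y"
  have recomb: "rho / 2 * ?P (a + 1, 1, 0, 1) = 0"
    using assms(2) genpow_recombined_not_recombined[of "(a + 1, 1, 0, 1)" y] by auto
  have "genpow rho (n + 2) (Suc k) (a, 0, 1, 0) y =
     (\<Sum>z\<in>states (n + 2). (if z = (a - 1, 0, 1, 0) then coalescence_rate a * ?P z else 0)
       - (if z = (a, 0, 1, 0) then (coalescence_rate a + rho / 2) * ?P z else 0)
       + (if z = (a + 1, 1, 0, 1) then rho / 2 * ?P z else 0))"
    by (simp only: genpow.simps, rule sum.cong, simp, simp only: gen_prerecombination)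
      (simp add: algebra_simps)
  also have "\<dots> = coalescence_rate a * ?P (a - 1, 0, 1, 0)
      - (coalescence_rate a + rho / 2) * ?P (a, 0, 1, 0)"
    using assms(1) recomb
    by (simp only: sum.distrib sum_subtractf finite_states sum.delta) (auto simp: states_def)
  finally show ?thesis .
qed

lemma genpow_no_recombination_recombined:
  assumes "a \<le> n" and "recombined y"
  shows "genpow 0 (n + 2) k (a, 0, 1, 0) y = 0"
  using assms(1)
proof (induction k arbitrary: a)
  case (Suc k)
  then show ?case using genpow_Suc_prerecombination[of a n 0 y k] by simp
qed (use assms(2) in auto)

lemma genpow_no_recombination_row_sum:
  assumes "a \<le> n"
  shows "(\<Sum>y\<in>states (n + 2). genpow 0 (n + 2) k (a, 0, 1, 0) y) = (if k = 0 then 1 else 0)"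
  using assms
proof (induction k arbitrary: a)
  case 0
  then have "(a, 0, 1, 0) \<in> states (n + 2)" by (simp add: states_def)
  then show ?case by (simp add: finite_states)
next
  case (Suc k)
  have "(\<Sum>y\<in>states (n + 2). genpow 0 (n + 2) (Suc k) (a, 0, 1, 0) y) =
     (\<Sum>y\<in>states (n + 2). coalescence_rate a * genpow 0 (n + 2) k (a - 1, 0, 1, 0) y
       - coalescence_rate a * genpow 0 (n + 2) k (a, 0, 1, 0) y)"
    using genpow_Suc_prerecombination[of a n 0 _ k] Suc.prems by (intro sum.cong) auto
  also have "\<dots> = 0"
    using Suc.IH[of "a - 1"] Suc.IH[of a] Suc.prems
    by (simp add: sum_subtractf sum_distrib_left[symmetric])
  finally show ?case by simp
qed

lemma genpow_no_recombination_bound: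
  assumes "a \<le> n"
  shows "\<bar>genpow 0 (n + 2) k (a, 0, 1, 0) y\<bar> \<le> (2 * coalescence_rate n + 1) ^ k"
  using assms
proof (induction k arbitrary: a)
  case (Suc k)
  let ?L = "2 * coalescence_rate n + 1" and ?P = "\<lambda>x. genpow 0 (n + 2) k x y"
  have "\<bar>?P (a - 1, 0, 1, 0) - ?P (a, 0, 1, 0)\<bar> \<le> 2 * ?L ^ k"
    using Suc.IH[of "a - 1"] Suc.IH[of a] Suc.prems by (simp add: abs_diff_le_iff) linarith
  then have "\<bar>genpow 0 (n + 2) (Suc k) (a, 0, 1, 0) y\<bar> \<le> coalescence_rate n * (2 * ?L ^ k)"
    using genpow_Suc_prerecombination[of a n 0 y k] Suc.prems
      coalescence_rate_nonneg[of a] coalescence_rate_mono[OF Suc.prems]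
    by (simp add: abs_mult right_diff_distrib[symmetric] mult_mono)
  also have "\<dots> \<le> ?L ^ Suc k"
    using coalescence_rate_nonneg[of n] by (simp add: algebra_simps)
  finally show ?case .
qed simp

lemma summable_genpow_no_recombination:
  assumes "a \<le> n"
  shows "summable (\<lambda>k. norm (t ^ k / fact k * genpow 0 (n + 2) k (a, 0, 1, 0) y))"
proof (rule summable_comparison_test')
  let ?L = "2 * coalescence_rate n + 1"
  show "summable (\<lambda>k. inverse (fact k) * (\<bar>t\<bar> * ?L) ^ k)" by (rule summable_exp)
  fix k
  have "\<bar>t ^ k\<bar> * \<bar>genpow 0 (n + 2) k (a, 0, 1, 0) y\<bar> \<le> \<bar>t\<bar> ^ k * ?L ^ k"
    using genpow_no_recombination_bound[OF assms] by (simp add: power_abs mult_left_mono)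
  then show "norm (norm (t ^ k / fact k * genpow 0 (n + 2) k (a, 0, 1, 0) y))
      \<le> inverse (fact k) * (\<bar>t\<bar> * ?L) ^ k"
    by (simp add: abs_mult power_mult_distrib divide_simps)
qed

lemma binomial_convolution_Suc:
  fixes u :: real
  shows "(\<Sum>i\<le>Suc k. of_nat (Suc k choose i) * u ^ i * G (Suc k - i)) =
           (\<Sum>i\<le>k. of_nat (k choose i) * u ^ i * G (Suc k - i))
         + u * (\<Sum>i\<le>k. of_nat (k choose i) * u ^ i * G (k - i))"
proof -
  have "(\<Sum>i\<le>Suc k. of_nat (Suc k choose i) * u ^ i * G (Suc k - i)) =
      G (Suc k) + (\<Sum>i\<le>k. of_nat (k choose Suc i) * u ^ Suc i * G (k - i))
      + (\<Sum>i\<le>k. of_nat (k choose i) * u ^ Suc i * G (k - i))"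
    by (subst sum.atMost_Suc_shift) (simp add: sum.distrib algebra_simps)
  also have "G (Suc k) + (\<Sum>i\<le>k. of_nat (k choose Suc i) * u ^ Suc i * G (k - i)) =
      (\<Sum>i\<le>Suc k. of_nat (k choose i) * u ^ i * G (Suc k - i))"
    by (subst sum.atMost_Suc_shift) simp
  also have "\<dots> = (\<Sum>i\<le>k. of_nat (k choose i) * u ^ i * G (Suc k - i))"
    by simp
  finally show ?thesis
    by (simp add: sum_distrib_left algebra_simps)
qed

text \<open>A constant killing rate c turns the solution of a linear recurrence into its binomial
  convolution with powers of -c, exactly as for exp(t(L - c)) = exp(-ct) exp(tL).\<close>

lemma killed_recurrence_binomial:
  fixes D G :: "nat \<Rightarrow> nat \<Rightarrow> real"
  assumes D_Suc: "\<And>k a. a \<le> n \<Longrightarrow> D (Suc k) a = r a * (D k (a - 1) - D k a) - c * D k a"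
    and G_Suc: "\<And>k a. a \<le> n \<Longrightarrow> G (Suc k) a = r a * (G k (a - 1) - G k a)"
    and D_0: "\<And>a. a \<le> n \<Longrightarrow> D 0 a = G 0 a"
    and "a \<le> n"
  shows "D k a = (\<Sum>i\<le>k. of_nat (k choose i) * (- c) ^ i * G (k - i) a)"
  using \<open>a \<le> n\<close>
proof (induction k arbitrary: a)
  case 0
  then show ?case by (simp add: D_0)
next
  case (Suc k)
  let ?S = "\<lambda>j b. \<Sum>i\<le>k. of_nat (k choose i) * (- c) ^ i * G (j - i) b"
  have "r a * (?S k (a - 1) - ?S k a) =
      (\<Sum>i\<le>k. of_nat (k choose i) * (- c) ^ i * (r a * (G (k - i) (a - 1) - G (k - i) a)))"
    by (simp add: sum_distrib_left sum_subtractf[symmetric] algebra_simps)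
  also have "\<dots> = ?S (Suc k) a"
    using G_Suc[OF Suc.prems] by (intro sum.cong) (auto simp: Suc_diff_le)
  finally have "D (Suc k) a = ?S (Suc k) a + (- c) * ?S k a"
    using D_Suc[OF Suc.prems] Suc.IH[of "a - 1"] Suc.IH[OF Suc.prems] Suc.prems by simp
  then show ?case
    using binomial_convolution_Suc[of k "- c" "\<lambda>j. G j a"] by simp
qed

lemma genpow_binomial_expansion:
  assumes "a \<le> n" and "\<not> recombined y"
  shows "genpow rho (n + 2) k (a, 0, 1, 0) y =
    (\<Sum>i\<le>k. of_nat (k choose i) * (- (rho / 2)) ^ i * genpow 0 (n + 2) (k - i) (a, 0, 1, 0) y)"
proof (rule killed_recurrence_binomial[OF _ _ _ assms(1)])
  fix k b assume "b \<le> n"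
  then show "genpow rho (n + 2) (Suc k) (b, 0, 1, 0) y =
      coalescence_rate b * (genpow rho (n + 2) k (b - 1, 0, 1, 0) y
        - genpow rho (n + 2) k (b, 0, 1, 0) y) - rho / 2 * genpow rho (n + 2) k (b, 0, 1, 0) y"
    and "genpow 0 (n + 2) (Suc k) (b, 0, 1, 0) y =
      coalescence_rate b * (genpow 0 (n + 2) k (b - 1, 0, 1, 0) y
        - genpow 0 (n + 2) k (b, 0, 1, 0) y)"
    using genpow_Suc_prerecombination[of b n rho y k] genpow_Suc_prerecombination[of b n 0 y k]
      assms(2)
    by (simp_all add: algebra_simps)
qed simp

lemma trans_not_recombined:
  assumes "a \<le> n" and "\<not> recombined y"
  shows "trans rho (n + 2) t (a, 0, 1, 0) y = exp (- (rho / 2) * t) * trans 0 (n + 2) t (a, 0, 1, 0) y"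
proof -
  define A where "A i = (- (rho / 2) * t) ^ i /\<^sub>R fact i" for i
  define B where "B j = t ^ j / fact j * genpow 0 (n + 2) j (a, 0, 1, 0) y" for j
  have "t ^ k / fact k * genpow rho (n + 2) k (a, 0, 1, 0) y = (\<Sum>i\<le>k. A i * B (k - i))" for k
  proof -
    have "t ^ k / fact k * genpow rho (n + 2) k (a, 0, 1, 0) y = (\<Sum>i\<le>k.
        t ^ k / fact k * (of_nat (k choose i) * (- (rho / 2)) ^ i * genpow 0 (n + 2) (k - i) (a, 0, 1, 0) y))"
      by (subst genpow_binomial_expansion[OF assms]) (rule sum_distrib_left)
    also have "\<dots> = (\<Sum>i\<le>k. A i * B (k - i))"
    proof (rule sum.cong)
      fix i assume "i \<in> {..k}"
      then have ik: "i \<le> k" by simp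
      have tk: "t ^ k = t ^ i * t ^ (k - i)"
        using ik by (simp add: power_add[symmetric])
      have "fact k \<noteq> (0 :: real)" by simp
      then show "t ^ k / fact k * (of_nat (k choose i) * (- (rho / 2)) ^ i
          * genpow 0 (n + 2) (k - i) (a, 0, 1, 0) y) = A i * B (k - i)"
        unfolding A_def B_def binomial_fact[OF ik] tk power_mult_distrib real_scaleR_def
        by (simp add: field_simps)
    qed simp
    finally show ?thesis .
  qed
  then have "trans rho (n + 2) t (a, 0, 1, 0) y = (\<Sum>k. \<Sum>i\<le>k. A i * B (k - i))"
    unfolding trans_def by simp
  also have "\<dots> = (\<Sum>k. A k) * (\<Sum>k. B k)"
    unfolding A_def B_def
    by (rule Cauchy_product[symmetric, OF summable_norm_exp summable_genpow_no_recombination[OF assms(1)]])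
  also have "(\<Sum>k. A k) = exp (- (rho / 2) * t)"
    unfolding A_def using exp_converges by (rule sums_unique[symmetric])
  finally show ?thesis
    unfolding B_def trans_def .
qed

lemma trans_no_recombination_recombined:
  assumes "a \<le> n" and "recombined y"
  shows "trans 0 (n + 2) t (a, 0, 1, 0) y = 0"
  unfolding trans_def genpow_no_recombination_recombined[OF assms] by simp

lemma trans_no_recombination_row_sum:
  assumes "a \<le> n"
  shows "(\<Sum>y\<in>states (n + 2). trans 0 (n + 2) t (a, 0, 1, 0) y) = 1"
proof -
  have "(\<Sum>y\<in>states (n + 2). trans 0 (n + 2) t (a, 0, 1, 0) y) =
      (\<Sum>k. \<Sum>y\<in>states (n + 2). t ^ k / fact k * genpow 0 (n + 2) k (a, 0, 1, 0) y)"
    unfolding trans_def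
    by (rule suminf_sum[symmetric])
      (rule summable_norm_cancel, rule summable_genpow_no_recombination[OF assms])
  also have "\<dots> = (\<Sum>k. if k = 0 then 1 else 0)"
  proof (rule suminf_cong)
    fix k
    show "(\<Sum>y\<in>states (n + 2). t ^ k / fact k * genpow 0 (n + 2) k (a, 0, 1, 0) y) =
        (if k = 0 then 1 else 0)"
      unfolding sum_distrib_left[symmetric] genpow_no_recombination_row_sum[OF assms] by simp
  qed
  also have "\<dots> = 1"
    using sums_single[of 0 "\<lambda>_. 1 :: real"] by (simp add: sums_iff)
  finally show ?thesis .
qed

lemma sum_not_recombined_trans:
  assumes "a \<le> n"
  shows "(\<Sum>y\<in>{y \<in> states (n + 2). \<not> recombined y}. trans rho (n + 2) t (a, 0, 1, 0) y * h y) =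
    exp (- (rho / 2) * t) * (\<Sum>y\<in>states (n + 2). trans 0 (n + 2) t (a, 0, 1, 0) y * h y)"
proof -
  have "(\<Sum>y\<in>{y \<in> states (n + 2). \<not> recombined y}. trans rho (n + 2) t (a, 0, 1, 0) y * h y) =
      (\<Sum>y\<in>{y \<in> states (n + 2). \<not> recombined y}.
        exp (- (rho / 2) * t) * (trans 0 (n + 2) t (a, 0, 1, 0) y * h y))"
  proof (rule sum.cong)
    fix y assume "y \<in> {y \<in> states (n + 2). \<not> recombined y}"
    then show "trans rho (n + 2) t (a, 0, 1, 0) y * h y =
        exp (- (rho / 2) * t) * (trans 0 (n + 2) t (a, 0, 1, 0) y * h y)"
      using trans_not_recombined[OF assms, of y rho t] by simp
  qed simp
  also have "\<dots> = exp (- (rho / 2) * t) *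
      (\<Sum>y\<in>{y \<in> states (n + 2). \<not> recombined y}. trans 0 (n + 2) t (a, 0, 1, 0) y * h y)"
    by (rule sum_distrib_left[symmetric])
  also have "(\<Sum>y\<in>{y \<in> states (n + 2). \<not> recombined y}. trans 0 (n + 2) t (a, 0, 1, 0) y * h y) =
      (\<Sum>y\<in>states (n + 2). trans 0 (n + 2) t (a, 0, 1, 0) y * h y)"
    using trans_no_recombination_recombined[OF assms]
    by (intro sum.mono_neutral_left finite_states) auto
  finally show ?thesis .
qed

lemma nu_no_recombination:
  "nu 0 n 0 1 t p 1 1 = (\<Sum>y\<in>states (n + 2). trans 0 (n + 2) t (n, 0, 1, 0) y * p ^ fst y)"
  unfolding nu_def by (intro sum.cong) (auto split: prod.splits)

theorem mainTheorem5:
  fixes rho t p :: real and n :: nat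
  assumes "rho > 0" and "t \<ge> 0" and "0 \<le> p" and "p \<le> 1"
  shows "cond_exp_norec rho n t p = nu 0 n 0 1 t p 1 1"
proof -
  let ?not_recombined = "{y \<in> states (n + 2). \<not> recombined y}"
  have numerator: "(\<Sum>y\<in>?not_recombined. trans rho (n + 2) t (n, 0, 1, 0) y * p ^ fst y) =
      exp (- (rho / 2) * t) * nu 0 n 0 1 t p 1 1"
    unfolding nu_no_recombination by (rule sum_not_recombined_trans) simp
  have "(\<Sum>y\<in>?not_recombined. trans rho (n + 2) t (n, 0, 1, 0) y) = exp (- (rho / 2) * t)"
    using sum_not_recombined_trans[of n n rho t "\<lambda>_. 1"] trans_no_recombination_row_sum[of n n t]
    by simp
  with numerator show ?thesis
    unfolding cond_exp_norec_def by simp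
qed

end
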